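(* Let $\iota_1\le\kappa_1$ and $\iota_2\le\kappa_2$ be natural numbers and let $(\iota,\kappa)=(\iota_1,\kappa_1)\wedge(\iota_2,\kappa_2)$. Then $L_{(\iota_1,\kappa_1)}\times L_{(\iota_2,\kappa_2)}\equiv_W L_{(\iota,\kappa)}$. In particular, with $L_{(0,2)}$ repeated $k\ge1$ times, the $k$-fold product $L_{(0,2)}\times\dots\times L_{(0,2)}$ is Wadge equivalent to $L_{(0,2k)}$.
   Context: For $\iota\le\kappa$, $L_{(\iota,\kappa)}\subseteq\{\iota,\dots,\kappa\}^\omega$ is the set of words in which the highest number occurring infinitely often is even. For word languages $L,M$, $L\times M=\{(x_1,y_1)(x_2,y_2)\cdots : x_1x_2\cdots\in L,\ y_1y_2\cdots\in M\}$ (words over the product alphabet). A pair $(i_1,i_2)\in\omega\times\omega$ is even if both $i_1,i_2$ are even, odd otherwise. Order $[\iota_1,\kappa_1]\times[\iota_2,\kappa_2]$ (where $[a,b]=\{a,\dots,b\}$) componentwise. For $m\in\{0,1\}$ and $n\ge m$, an alternating chain of type $(m,n)$ is a sequence $(x_m,y_m)<(x_{m+1},y_{m+1})<\dots<(x_n,y_n)$ (strict in the componentwise order) such that $(x_i,y_i)$ is even iff $i$ is even. $(\iota_1,\kappa_1)\wedge(\iota_2,\kappa_2)$ is the type of a longest alternating chain in $[\iota_1,\kappa_1]\times[\iota_2,\kappa_2]$ (this is well defined). $\equiv_W$ is mutual continuous reducibility between the Cantor-type spaces of infinite words. *)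

theory Defs
  imports Main
begin

definition words :: "'a set \<Rightarrow> (nat \<Rightarrow> 'a) set" where
  "words A = {x. \<forall>i. x i \<in> A}"

definition wcont :: "'a set \<Rightarrow> 'b set \<Rightarrow> ((nat \<Rightarrow> 'a) \<Rightarrow> (nat \<Rightarrow> 'b)) \<Rightarrow> bool" where
  "wcont A B f \<longleftrightarrow> (\<forall>x\<in>words A. f x \<in> words B) \<and>
     (\<forall>x\<in>words A. \<forall>n. \<exists>m. \<forall>y\<in>words A. (\<forall>i<m. y i = x i) \<longrightarrow> (\<forall>i<n. f y i = f x i))"

definition wadge_le :: "'a set \<Rightarrow> (nat \<Rightarrow> 'a) set \<Rightarrow> 'b set \<Rightarrow> (nat \<Rightarrow> 'b) set \<Rightarrow> bool" where
  "wadge_le A L B M \<longleftrightarrow> (\<exists>f. wcont A B f \<and> (\<forall>x\<in>words A. x \<in> L \<longleftrightarrow> f x \<in> M))"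

definition wadge_eq :: "'a set \<Rightarrow> (nat \<Rightarrow> 'a) set \<Rightarrow> 'b set \<Rightarrow> (nat \<Rightarrow> 'b) set \<Rightarrow> bool" where
  "wadge_eq A L B M \<longleftrightarrow> wadge_le A L B M \<and> wadge_le B M A L"

definition parity_lang :: "nat \<Rightarrow> nat \<Rightarrow> (nat \<Rightarrow> nat) set" where
  "parity_lang \<iota> \<kappa> = {x \<in> words {\<iota>..\<kappa>}. even (Max {a \<in> {\<iota>..\<kappa>}. infinite {i. x i = a}})}"

definition lang_prod :: "(nat \<Rightarrow> 'a) set \<Rightarrow> (nat \<Rightarrow> 'b) set \<Rightarrow> (nat \<Rightarrow> 'a \<times> 'b) set" where
  "lang_prod L M = {x. (\<lambda>i. fst (x i)) \<in> L \<and> (\<lambda>i. snd (x i)) \<in> M}"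

definition even_pair :: "nat \<times> nat \<Rightarrow> bool" where
  "even_pair p \<longleftrightarrow> even (fst p) \<and> even (snd p)"

definition pair_less :: "nat \<times> nat \<Rightarrow> nat \<times> nat \<Rightarrow> bool" where
  "pair_less p q \<longleftrightarrow> fst p \<le> fst q \<and> snd p \<le> snd q \<and> p \<noteq> q"

definition alt_chain :: "nat \<Rightarrow> nat \<Rightarrow> nat \<Rightarrow> nat \<Rightarrow> nat \<Rightarrow> nat \<Rightarrow> bool" where
  "alt_chain i1 k1 i2 k2 m n \<longleftrightarrow> m \<in> {0,1} \<and> m \<le> n \<and>
     (\<exists>c :: nat \<Rightarrow> nat \<times> nat.
        (\<forall>j\<in>{m..n}. c j \<in> {i1..k1} \<times> {i2..k2} \<and> (even_pair (c j) \<longleftrightarrow> even j)) \<and>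
        (\<forall>j\<in>{m..<n}. pair_less (c j) (c (Suc j))))"

definition chain_meet :: "nat \<times> nat \<Rightarrow> nat \<times> nat \<Rightarrow> nat \<times> nat" where
  "chain_meet p q = (THE t. alt_chain (fst p) (snd p) (fst q) (snd q) (fst t) (snd t) \<and>
      (\<forall>m' n'. alt_chain (fst p) (snd p) (fst q) (snd q) m' n' \<longrightarrow> n' - m' \<le> snd t - fst t))"

definition tuple_alph :: "nat \<Rightarrow> nat set \<Rightarrow> (nat \<Rightarrow> nat) set" where
  "tuple_alph k A = {v. (\<forall>j<k. v j \<in> A) \<and> (\<forall>j\<ge>k. v j = 0)}"

definition lang_pow :: "nat \<Rightarrow> (nat \<Rightarrow> nat) set \<Rightarrow> (nat \<Rightarrow> (nat \<Rightarrow> nat)) set" where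
  "lang_pow k L = {x. \<forall>j<k. (\<lambda>i. x i j) \<in> L}"

end

theory Submission
  imports Defs "HOL-Library.Infinite_Set" "HOL-Library.Product_Order"
begin

text \<open>
  Membership of a word in a parity language, in a product of two parity languages, or in a
  k-fold power of \<open>L(0,2)\<close> depends only on the set of letters occurring infinitely often.

  Reductions towards a parity language \<open>L(lo,hi)\<close> read the input through a sliding
  window: at position i we look at the letters seen since the previous occurrence of the
  current letter. Eventually every window is contained in the set S of infinitely recurring
  letters, and infinitely often it equals S. Hence, if a monotone rank R maps nonempty
  letter sets to \<open>{lo..hi}\<close> and the source condition is "R S is even", then the continuous
  map \<open>x \<mapsto> (R (window x i))\<^sub>i\<close> is a reduction (lemma wadge_le_parity_by_window).
  Reductions out of \<open>L(lo,hi)\<close> are letter-to-letter maps along a monotone parity-respecting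
  chain (lemma wadge_le_parity_by_letters).

  For the product \<open>L(i1,k1) \<times> L(i2,k2)\<close> the rank of a letter set is the chain rank of its upper
  corner: the largest index at which an alternating chain in the box can end there. Analysing
  longest alternating chains shows that these ranks lie in the interval given by
  \<open>chain_meet\<close>, and a longest chain provides the reduction in the other direction. For the
  k-fold power the rank is twice the number of coordinates equal to 2, plus one if some
  coordinate equals 1; conversely a number \<open>a \<le> 2k\<close> is encoded as a tuple.
\<close>

lemma pair_less_iff_less: "pair_less p q \<longleftrightarrow> p < q"
  unfolding pair_less_def less_le less_eq_prod_def by auto

definition inf_letters :: "'a set \<Rightarrow> (nat \<Rightarrow> 'a) \<Rightarrow> 'a set" where
  "inf_letters A x = {a \<in> A. infinite {i. x i = a}}"

lemma parity_lang_iff: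
  "x \<in> parity_lang lo hi \<longleftrightarrow> x \<in> words {lo..hi} \<and> even (Max (inf_letters {lo..hi} x))"
  unfolding parity_lang_def inf_letters_def by simp

lemma inf_letters_subset: "inf_letters A x \<subseteq> A"
  unfolding inf_letters_def by auto

lemma inf_letters_finite: "finite A \<Longrightarrow> finite (inf_letters A x)"
  using inf_letters_subset finite_subset by metis

lemma inf_letters_nonempty:
  assumes "finite A" and "x \<in> words A"
  shows "inf_letters A x \<noteq> {}"
proof
  assume "inf_letters A x = {}"
  then have "finite (\<Union>a\<in>A. {i. x i = a})"
    using assms(1) by (auto simp: inf_letters_def)
  moreover have "(\<Union>a\<in>A. {i. x i = a}) = UNIV"
    using assms(2) by (auto simp: words_def)
  ultimately show False by simp
qed

lemma inf_letters_map:
  assumes "finite A" and "x \<in> words A" and "\<phi> ` A \<subseteq> C"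
  shows "inf_letters C (\<lambda>i. \<phi> (x i)) = \<phi> ` inf_letters A x"
proof (intro equalityI subsetI)
  fix c assume c: "c \<in> inf_letters C (\<lambda>i. \<phi> (x i))"
  have "{i. \<phi> (x i) = c} = (\<Union>a\<in>{a\<in>A. \<phi> a = c}. {i. x i = a})"
    using assms(2) by (auto simp: words_def)
  then have "\<exists>a\<in>A. \<phi> a = c \<and> infinite {i. x i = a}"
    using c assms(1) by (auto simp: inf_letters_def)
  then show "c \<in> \<phi> ` inf_letters A x"
    by (auto simp: inf_letters_def)
next
  fix c assume "c \<in> \<phi> ` inf_letters A x"
  then obtain a where a: "a \<in> A" "infinite {i. x i = a}" "c = \<phi> a"
    by (auto simp: inf_letters_def)
  then have "{i. x i = a} \<subseteq> {i. \<phi> (x i) = c}" by auto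
  then have "infinite {i. \<phi> (x i) = c}" using a(2) infinite_super by blast
  then show "c \<in> inf_letters C (\<lambda>i. \<phi> (x i))"
    using a assms(3) by (auto simp: inf_letters_def)
qed

lemma inf_letters_eventually:
  assumes "finite A" and "x \<in> words A"
  shows "\<exists>T. \<forall>i\<ge>T. x i \<in> inf_letters A x"
proof -
  let ?F = "\<Union>a\<in>A - inf_letters A x. {i. x i = a}"
  have "finite ?F"
    using assms(1) by (intro finite_UN_I) (auto simp: inf_letters_def)
  then obtain T where T: "?F \<subseteq> {..<T}"
    using finite_nat_iff_bounded by blast
  have "x i \<in> inf_letters A x" if "T \<le> i" for i
  proof (rule ccontr)
    assume "x i \<notin> inf_letters A x"
    moreover have "x i \<in> A" using assms(2) by (auto simp: words_def)
    ultimately have "i \<in> ?F" by blast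
    then show False using T that by auto
  qed
  then show ?thesis by blast
qed

lemma inf_letters_occur_after:
  assumes "finite A"
  shows "\<exists>N. inf_letters A x \<subseteq> x ` {T..<N}"
proof -
  have "\<forall>a\<in>inf_letters A x. \<exists>t. T \<le> t \<and> x t = a"
    by (auto simp: inf_letters_def infinite_nat_iff_unbounded_le)
  then obtain t where t: "\<forall>a\<in>inf_letters A x. T \<le> t a \<and> x (t a) = a"
    by metis
  define N where "N = Suc (Max (t ` inf_letters A x))"
  have "t a < N" if "a \<in> inf_letters A x" for a
    using that inf_letters_finite[OF assms] by (auto simp: N_def less_Suc_eq_le)
  then have "inf_letters A x \<subseteq> x ` {T..<N}"
    using t by (force simp: image_iff)
  then show ?thesis ..
qed

lemma Max_inf_letters_eqI:
  assumes "finite C" and "y \<in> words C"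
    and "\<forall>T. \<exists>i\<ge>T. y i = a" and "\<exists>T. \<forall>i\<ge>T. y i \<le> a"
  shows "Max (inf_letters C y) = a"
proof (rule Max_eqI)
  show "finite (inf_letters C y)" using inf_letters_finite[OF assms(1)] .
  obtain i where "y i = a" using assms(3) by auto
  then have "a \<in> C" using assms(2) by (auto simp: words_def)
  moreover have "infinite {i. y i = a}"
    using assms(3) by (auto simp: infinite_nat_iff_unbounded_le)
  ultimately show "a \<in> inf_letters C y" by (auto simp: inf_letters_def)
next
  fix c assume "c \<in> inf_letters C y"
  then have "infinite {i. y i = c}" by (auto simp: inf_letters_def)
  moreover obtain T where T: "\<forall>i\<ge>T. y i \<le> a" using assms(4) by auto
  ultimately obtain i where "i \<ge> T" "y i = c" by (auto simp: infinite_nat_iff_unbounded_le)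
  then show "c \<le> a" using T by auto
qed

lemma Max_mono_image:
  fixes \<phi> :: "'a::linorder \<Rightarrow> 'b::linorder"
  assumes "finite S" "S \<noteq> {}" "\<And>a b. a \<in> S \<Longrightarrow> b \<in> S \<Longrightarrow> a \<le> b \<Longrightarrow> \<phi> a \<le> \<phi> b"
  shows "Max (\<phi> ` S) = \<phi> (Max S)"
  using assms by (intro Max_eqI) (auto intro: assms(3) Max_ge Max_in)

text \<open>The letters seen since the previous occurrence of the current letter (since the start if there is none).\<close>
definition window :: "(nat \<Rightarrow> 'a) \<Rightarrow> nat \<Rightarrow> 'a set" where
  "window x i = x ` {j. j \<le> i \<and> x i \<notin> x ` {j<..<i}}"

text \<open>The window at position i depends only on the prefix up to i; this gives continuity.\<close>
lemma window_local:
  assumes "\<forall>j\<le>i. y j = x j"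
  shows "window y i = window x i"
proof -
  have "y ` {j<..<i} = x ` {j<..<i}" for j
    using assms by (intro image_cong) auto
  then show ?thesis
    using assms unfolding window_def by (auto simp: image_iff)
qed

lemma window_current: "x i \<in> window x i"
  unfolding window_def by auto

lemma window_subset: "x \<in> words A \<Longrightarrow> window x i \<subseteq> A"
  unfolding window_def words_def by auto

text \<open>Once all transient letters are gone and every recurring letter has been seen again, windows contain only recurring letters.\<close>
lemma window_eventually_subset:
  assumes "finite A" and "x \<in> words A"
  shows "\<exists>T. \<forall>i\<ge>T. window x i \<subseteq> inf_letters A x"
proof -
  obtain T0 where T0: "\<forall>i\<ge>T0. x i \<in> inf_letters A x"
    using inf_letters_eventually[OF assms] by blast
  obtain N where N: "inf_letters A x \<subseteq> x ` {T0..<N}"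
    using inf_letters_occur_after[OF assms(1)] by blast
  have "window x i \<subseteq> inf_letters A x" if i: "i \<ge> max T0 N" for i
  proof
    fix a assume "a \<in> window x i"
    then obtain j where j: "j \<le> i" "x i \<notin> x ` {j<..<i}" "a = x j"
      unfolding window_def by auto
    obtain t where t: "T0 \<le> t" "t < N" "x t = x i"
      using N T0 i by force
    have "\<not> (j < t)"
    proof
      assume "j < t"
      then have "x i \<in> x ` {j<..<i}" using t i by (auto simp: image_iff intro!: bexI[of _ t])
      then show False using j(2) by blast
    qed
    then show "a \<in> inf_letters A x" using T0 t j by auto
  qed
  then show ?thesis by blast
qed

text \<open>Infinitely often the window is exactly the set of recurring letters: take the first position i
  after T at which all recurring letters have reappeared; then x i is new in that stretch.\<close>
lemma window_frequently_eq:
  assumes "finite A" and "x \<in> words A"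
  shows "\<exists>i\<ge>T. window x i = inf_letters A x"
proof -
  define S where "S = inf_letters A x"
  obtain T1 where T1: "\<forall>i\<ge>T1. window x i \<subseteq> S"
    using window_eventually_subset[OF assms] unfolding S_def by blast
  define T' where "T' = max T T1"
  obtain N where "S \<subseteq> x ` {T'..<N}"
    using inf_letters_occur_after[OF assms(1)] unfolding S_def by blast
  then have covered: "S \<subseteq> x ` {T'..N}" by fastforce
  define i where "i = (LEAST i. S \<subseteq> x ` {T'..i})"
  have Si: "S \<subseteq> x ` {T'..i}"
    unfolding i_def using covered by (rule LeastI)
  have iT: "T' \<le> i"
    using Si inf_letters_nonempty[OF assms] unfolding S_def by (cases "T' \<le> i") auto
  have fresh: "x i \<notin> x ` {T'..<i}"
  proof
    assume "x i \<in> x ` {T'..<i}"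
    then obtain t where t: "T' \<le> t" "t < i" "x t = x i" by auto
    then have "{T'..i} = insert i {T'..i - 1}" and "x i \<in> x ` {T'..i - 1}"
      by (auto intro!: image_eqI[of _ _ t])
    then have "S \<subseteq> x ` {T'..i - 1}" using Si by auto
    then have "i \<le> i - 1"
      using Si unfolding i_def by (intro Least_le) auto
    then show False using t by linarith
  qed
  have "x ` {T'..i} \<subseteq> window x i"
    unfolding window_def using fresh by (intro image_mono) auto
  then have "window x i = S"
    using Si T1 iT by (force simp: T'_def)
  then show ?thesis using iT unfolding S_def T'_def by auto
qed

lemma wcont_letterwise:
  assumes "\<And>a. a \<in> A \<Longrightarrow> g a \<in> B"
  shows "wcont A B (\<lambda>x i. g (x i))"
  unfolding wcont_def
proof (intro conjI ballI allI)
  show "(\<lambda>i. g (x i)) \<in> words B" if "x \<in> words A" for x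
    using that assms by (auto simp: words_def)
  show "\<exists>m. \<forall>y\<in>words A. (\<forall>i<m. y i = x i) \<longrightarrow> (\<forall>i<n. g (y i) = g (x i))" for x n
    by (rule exI[of _ n]) auto
qed

lemma wcont_window:
  assumes "\<And>W. W \<noteq> {} \<Longrightarrow> W \<subseteq> A \<Longrightarrow> R W \<in> C"
  shows "wcont A C (\<lambda>x i. R (window x i))"
  unfolding wcont_def
proof (intro conjI ballI allI)
  fix x assume "x \<in> words A"
  then have "window x i \<noteq> {}" "window x i \<subseteq> A" for i
    using window_current window_subset by fast+
  then show "(\<lambda>i. R (window x i)) \<in> words C"
    using assms unfolding words_def by simp
next
  fix x :: "nat \<Rightarrow> 'a" and n
  show "\<exists>m. \<forall>y\<in>words A. (\<forall>i<m. y i = x i) \<longrightarrow> (\<forall>i<n. R (window y i) = R (window x i))"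
  proof (intro exI[of _ n] ballI impI allI)
    fix y i assume "\<forall>i<n. y i = x i" "i < n"
    then have "\<forall>j\<le>i. y j = x j" by auto
    then show "R (window y i) = R (window x i)" by (simp only: window_local)
  qed
qed

lemma wadge_le_parity_by_window:
  fixes R :: "'a set \<Rightarrow> nat"
  assumes A: "finite A"
    and range: "\<And>W. W \<noteq> {} \<Longrightarrow> W \<subseteq> A \<Longrightarrow> R W \<in> {lo..hi}"
    and mono: "\<And>W W'. W \<noteq> {} \<Longrightarrow> W \<subseteq> W' \<Longrightarrow> W' \<subseteq> A \<Longrightarrow> R W \<le> R W'"
    and L: "\<And>x. x \<in> words A \<Longrightarrow> x \<in> L \<longleftrightarrow> even (R (inf_letters A x))"
  shows "wadge_le A L {lo..hi} (parity_lang lo hi)"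
  unfolding wadge_le_def
proof (intro exI conjI ballI)
  show cont: "wcont A {lo..hi} (\<lambda>x i. R (window x i))"
    using wcont_window range by blast
  fix x assume x: "x \<in> words A"
  define S where "S = inf_letters A x"
  have y: "(\<lambda>i. R (window x i)) \<in> words {lo..hi}"
    using cont x unfolding wcont_def by blast
  have "\<forall>T. \<exists>i\<ge>T. R (window x i) = R S"
    using window_frequently_eq[OF A x] unfolding S_def by metis
  moreover have "\<exists>T. \<forall>i\<ge>T. R (window x i) \<le> R S"
  proof -
    obtain T where T: "\<forall>i\<ge>T. window x i \<subseteq> S"
      using window_eventually_subset[OF A x] unfolding S_def by blast
    have "R (window x i) \<le> R S" if "i \<ge> T" for i
      using window_current[of x i] T that inf_letters_subset[of A x]
      unfolding S_def by (intro mono) auto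
    then show ?thesis by blast
  qed
  ultimately have "Max (inf_letters {lo..hi} (\<lambda>i. R (window x i))) = R S"
    using Max_inf_letters_eqI[OF _ y] by simp
  then show "x \<in> L \<longleftrightarrow> (\<lambda>i. R (window x i)) \<in> parity_lang lo hi"
    using L[OF x] y unfolding parity_lang_iff S_def by simp
qed

lemma wadge_le_parity_by_letters:
  assumes g: "\<And>a. a \<in> {lo..hi} \<Longrightarrow> g a \<in> B"
    and M: "\<And>z. z \<in> words {lo..hi} \<Longrightarrow> (\<lambda>i. g (z i)) \<in> M \<longleftrightarrow> even (Max (inf_letters {lo..hi} z))"
  shows "wadge_le {lo..hi} (parity_lang lo hi) B M"
  unfolding wadge_le_def
proof (intro exI conjI ballI)
  show "wcont {lo..hi} B (\<lambda>x i. g (x i))" using wcont_letterwise g .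
  show "z \<in> parity_lang lo hi \<longleftrightarrow> (\<lambda>i. g (z i)) \<in> M" if "z \<in> words {lo..hi}" for z
    using M[OF that] that unfolding parity_lang_iff by simp
qed

definition alt_chain_on :: "(nat \<times> nat) set \<Rightarrow> (nat \<Rightarrow> nat \<times> nat) \<Rightarrow> nat \<Rightarrow> nat \<Rightarrow> bool" where
  "alt_chain_on P c m n \<longleftrightarrow> m \<in> {0,1} \<and> m \<le> n \<and>
     (\<forall>j\<in>{m..n}. c j \<in> P \<and> (even_pair (c j) \<longleftrightarrow> even j)) \<and> (\<forall>j\<in>{m..<n}. c j < c (Suc j))"

lemma alt_chain_iff: "alt_chain i1 k1 i2 k2 m n \<longleftrightarrow> (\<exists>c. alt_chain_on ({i1..k1} \<times> {i2..k2}) c m n)"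
  unfolding alt_chain_def alt_chain_on_def pair_less_iff_less by auto

lemma alt_chain_last:
  "alt_chain_on P c m n \<Longrightarrow> m \<in> {0,1} \<and> m \<le> n \<and> c n \<in> P \<and> (even_pair (c n) \<longleftrightarrow> even n)"
  unfolding alt_chain_on_def by auto

lemma alt_chain_single:
  "p \<in> P \<Longrightarrow> alt_chain_on P (\<lambda>_. p) (if even_pair p then 0 else 1) (if even_pair p then 0 else 1)"
  unfolding alt_chain_on_def by auto

lemma alt_chain_extend:
  assumes c: "alt_chain_on P c m n" and "q \<in> P" "c n < q" "even_pair q \<longleftrightarrow> odd n"
  shows "alt_chain_on P (c(Suc n := q)) m (Suc n)"
proof -
  have "\<forall>j\<in>{m..Suc n}. (c(Suc n := q)) j \<in> P \<and> (even_pair ((c(Suc n := q)) j) \<longleftrightarrow> even j)"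
  proof
    fix j assume "j \<in> {m..Suc n}"
    then show "(c(Suc n := q)) j \<in> P \<and> (even_pair ((c(Suc n := q)) j) \<longleftrightarrow> even j)"
      using c assms(2,4) by (cases "j = Suc n") (auto simp: alt_chain_on_def)
  qed
  moreover have "\<forall>j\<in>{m..<Suc n}. (c(Suc n := q)) j < (c(Suc n := q)) (Suc j)"
  proof
    fix j assume "j \<in> {m..<Suc n}"
    then show "(c(Suc n := q)) j < (c(Suc n := q)) (Suc j)"
      using c assms(3) by (cases "j = n") (auto simp: alt_chain_on_def)
  qed
  ultimately show ?thesis using c by (auto simp: alt_chain_on_def)
qed

lemma alt_chain_replace_last:
  assumes c: "alt_chain_on P c m n" and "q \<in> P" "c n \<le> q" "even_pair q \<longleftrightarrow> even_pair (c n)"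
  shows "alt_chain_on P (c(n := q)) m n"
proof -
  have "\<forall>j\<in>{m..n}. (c(n := q)) j \<in> P \<and> (even_pair ((c(n := q)) j) \<longleftrightarrow> even j)"
  proof
    fix j assume "j \<in> {m..n}"
    then show "(c(n := q)) j \<in> P \<and> (even_pair ((c(n := q)) j) \<longleftrightarrow> even j)"
      using c assms(2,4) by (cases "j = n") (auto simp: alt_chain_on_def)
  qed
  moreover have "\<forall>j\<in>{m..<n}. (c(n := q)) j < (c(n := q)) (Suc j)"
  proof
    fix j assume j: "j \<in> {m..<n}"
    then have "c j < c (Suc j)" using c by (auto simp: alt_chain_on_def)
    then show "(c(n := q)) j < (c(n := q)) (Suc j)"
      using j assms(3) by (cases "Suc j = n") (auto intro: less_le_trans)
  qed
  ultimately show ?thesis using c by (auto simp: alt_chain_on_def)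
qed

lemma alt_chain_extend_below:
  assumes c: "alt_chain_on P c 1 n" and "b \<in> P" "b < c 1" "even_pair b"
  shows "alt_chain_on P (c(0 := b)) 0 n"
proof -
  have "\<forall>j\<in>{0..n}. (c(0 := b)) j \<in> P \<and> (even_pair ((c(0 := b)) j) \<longleftrightarrow> even j)"
  proof
    fix j assume "j \<in> {0..n}"
    then show "(c(0 := b)) j \<in> P \<and> (even_pair ((c(0 := b)) j) \<longleftrightarrow> even j)"
      using c assms(2,4) by (cases "j = 0") (auto simp: alt_chain_on_def)
  qed
  moreover have "\<forall>j\<in>{0..<n}. (c(0 := b)) j < (c(0 := b)) (Suc j)"
  proof
    fix j assume "j \<in> {0..<n}"
    then show "(c(0 := b)) j < (c(0 := b)) (Suc j)"
      using c assms(3) by (cases "j = 0") (auto simp: alt_chain_on_def)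
  qed
  ultimately show ?thesis by (auto simp: alt_chain_on_def)
qed

lemma alt_chain_mono:
  assumes c: "alt_chain_on P c m n" and "m \<le> a" "a \<le> b" "b \<le> n"
  shows "c a \<le> c b"
  using assms(3,4)
proof (induction b rule: dec_induct)
  case (step b)
  then have "c b < c (Suc b)" using c assms(2) by (auto simp: alt_chain_on_def)
  then show ?case using step by auto
qed simp

lemma alt_chain_length:
  assumes c: "alt_chain_on P c m n"
  shows "fst (c m) + snd (c m) + (n - m) \<le> fst (c n) + snd (c n)"
proof -
  have "fst (c m) + snd (c m) + (j - m) \<le> fst (c j) + snd (c j)" if "m \<le> j" "j \<le> n" for j
    using that
  proof (induction j rule: dec_induct)
    case (step j)
    then have "c j < c (Suc j)" using c by (auto simp: alt_chain_on_def)
    then have "fst (c j) + snd (c j) < fst (c (Suc j)) + snd (c (Suc j))"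
      by (auto simp: less_le less_eq_prod_def prod_eq_iff)
    then show ?case using step by auto
  qed simp
  then show ?thesis using c by (auto simp: alt_chain_on_def)
qed

context
  fixes i1 k1 i2 k2 :: nat
  assumes ik1: "i1 \<le> k1" and ik2: "i2 \<le> k2"
begin

abbreviation box :: "(nat \<times> nat) set" where
  "box \<equiv> {i1..k1} \<times> {i2..k2}"

lemma box_chain_length: "alt_chain_on box c m n \<Longrightarrow> n - m \<le> (k1 - i1) + (k2 - i2)"
proof -
  assume c: "alt_chain_on box c m n"
  then have "c m \<in> box" "c n \<in> box" by (auto simp: alt_chain_on_def)
  then show ?thesis using alt_chain_length[OF c] by (auto simp: mem_Times_iff)
qed

definition max_chain_len :: nat where
  "max_chain_len = Max {n - m | m n c. alt_chain_on box c m n}"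

lemma chain_lengths_finite: "finite {n - m | m n c. alt_chain_on box c m n}"
  by (rule finite_subset[of _ "{..(k1 - i1) + (k2 - i2)}"]) (auto dest: box_chain_length)

lemma chain_len_le_max: "alt_chain_on box c m n \<Longrightarrow> n - m \<le> max_chain_len"
  unfolding max_chain_len_def using chain_lengths_finite by (intro Max_ge) auto

lemma longest_chain_exists: "\<exists>c m n. alt_chain_on box c m n \<and> n - m = max_chain_len"
proof -
  have "alt_chain_on box (\<lambda>_. (i1, i2)) (if even_pair (i1, i2) then 0 else 1) (if even_pair (i1, i2) then 0 else 1)"
    using ik1 ik2 by (intro alt_chain_single) auto
  then have "{n - m | m n c. alt_chain_on box c m n} \<noteq> {}" by blast
  then have "max_chain_len \<in> {n - m | m n c. alt_chain_on box c m n}"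
    unfolding max_chain_len_def using chain_lengths_finite by (rule Max_in[rotated])
  then obtain c m n where "max_chain_len = n - m" "alt_chain_on box c m n" by blast
  then show ?thesis by auto
qed

text \<open>A longest chain can always be prolonged by the top corner of the box unless its
  last element already has the parity of that corner.\<close>
lemma longest_chain_end_parity:
  assumes c: "alt_chain_on box c m n" and len: "n - m = max_chain_len"
  shows "even_pair (k1, k2) \<longleftrightarrow> even n"
proof (rule ccontr)
  assume parity: "\<not> (even_pair (k1, k2) \<longleftrightarrow> even n)"
  have last: "c n \<in> box" "even_pair (c n) \<longleftrightarrow> even n" "m \<le> n"
    using alt_chain_last[OF c] by auto
  then have "c n \<le> (k1, k2)" and "c n \<noteq> (k1, k2)"
    using parity by (auto simp: less_eq_prod_def)
  then have "alt_chain_on box (c(Suc n := (k1, k2))) m (Suc n)"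
    using c parity ik1 ik2 by (intro alt_chain_extend) auto
  then have "Suc n - m \<le> max_chain_len" by (rule chain_len_le_max)
  then show False using len last(3) by simp
qed

text \<open>All longest chains have the same type: they have the same length, their ends have the
  parity of the top corner, and their starts lie in {0,1}.\<close>
lemma longest_chain_type_unique:
  assumes "alt_chain_on box c m n" "n - m = max_chain_len"
    and "alt_chain_on box c' m' n'" "n' - m' = max_chain_len"
  shows "m' = m \<and> n' = n"
  using longest_chain_end_parity[OF assms(1,2)] longest_chain_end_parity[OF assms(3,4)]
    alt_chain_last[OF assms(1)] alt_chain_last[OF assms(3)] assms(2,4)
  by auto presburger+

lemma chain_meet_eq:
  assumes c: "alt_chain_on box c m n" and len: "n - m = max_chain_len"
  shows "chain_meet (i1, k1) (i2, k2) = (m, n)"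
  unfolding chain_meet_def fst_conv snd_conv alt_chain_iff
proof (rule the_equality)
  show "(\<exists>c. alt_chain_on box c (fst (m, n)) (snd (m, n))) \<and>
      (\<forall>m' n'. (\<exists>c. alt_chain_on box c m' n') \<longrightarrow> n' - m' \<le> snd (m, n) - fst (m, n))"
    using c len chain_len_le_max by auto
next
  fix t assume t: "(\<exists>c. alt_chain_on box c (fst t) (snd t)) \<and>
      (\<forall>m' n'. (\<exists>c. alt_chain_on box c m' n') \<longrightarrow> n' - m' \<le> snd t - fst t)"
  then obtain c' where c': "alt_chain_on box c' (fst t) (snd t)" by blast
  have "snd t - fst t = max_chain_len"
    using t c len chain_len_le_max[OF c'] by (metis le_antisym)
  then show "t = (m, n)"
    using longest_chain_type_unique[OF c len c'] by (simp add: prod_eq_iff)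
qed

definition chain_rank :: "nat \<times> nat \<Rightarrow> nat" where
  "chain_rank p = Max {n. \<exists>c m. alt_chain_on box c m n \<and> c n = p}"

lemma chain_ends_finite: "finite {n. \<exists>c m. alt_chain_on box c m n \<and> c n = p}"
proof (rule finite_subset)
  show "{n. \<exists>c m. alt_chain_on box c m n \<and> c n = p} \<subseteq> {..1 + max_chain_len}"
    using chain_len_le_max alt_chain_last by fastforce
qed simp

lemma chain_rank_ge: "alt_chain_on box c m n \<Longrightarrow> n \<le> chain_rank (c n)"
  unfolding chain_rank_def using chain_ends_finite by (intro Max_ge) auto

lemma chain_rank_attained:
  assumes "p \<in> box"
  shows "\<exists>c m. alt_chain_on box c m (chain_rank p) \<and> c (chain_rank p) = p"
proof -
  have "{n. \<exists>c m. alt_chain_on box c m n \<and> c n = p} \<noteq> {}"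
    using alt_chain_single[OF assms] by blast
  then have "chain_rank p \<in> {n. \<exists>c m. alt_chain_on box c m n \<and> c n = p}"
    unfolding chain_rank_def using chain_ends_finite by (rule Max_in[rotated])
  then show ?thesis by blast
qed

lemma chain_rank_parity: "p \<in> box \<Longrightarrow> even (chain_rank p) \<longleftrightarrow> even_pair p"
  using chain_rank_attained alt_chain_last by metis

text \<open>A chain ending at \<open>p \<le> q\<close> can be redirected to end at \<open>q\<close> (same parity) or
  prolonged by \<open>q\<close> (opposite parity); hence the rank is monotone.\<close>
lemma chain_rank_mono:
  assumes p: "p \<in> box" and q: "q \<in> box" and pq: "p \<le> q"
  shows "chain_rank p \<le> chain_rank q"
proof -
  obtain c m where c: "alt_chain_on box c m (chain_rank p)" "c (chain_rank p) = p"
    using chain_rank_attained[OF p] by blast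
  show ?thesis
  proof (cases "even_pair q \<longleftrightarrow> even_pair p")
    case True
    then have "alt_chain_on box (c(chain_rank p := q)) m (chain_rank p)"
      using c q pq by (intro alt_chain_replace_last) auto
    then show ?thesis using chain_rank_ge by fastforce
  next
    case False
    then have "p < q" using pq by (auto simp: less_le)
    moreover have "even_pair q \<longleftrightarrow> odd (chain_rank p)"
      using False chain_rank_parity[OF p] by auto
    ultimately have "alt_chain_on box (c(Suc (chain_rank p) := q)) m (Suc (chain_rank p))"
      using c q by (intro alt_chain_extend) auto
    then show ?thesis using chain_rank_ge by fastforce
  qed
qed

text \<open>No chain ends beyond the end of a longest chain: it would be a longest chain of the wrong parity.\<close>
lemma chain_rank_upper:
  assumes cs: "alt_chain_on box cs ms ns" and len: "ns - ms = max_chain_len" and p: "p \<in> box"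
  shows "chain_rank p \<le> ns"
proof (rule ccontr)
  assume gt: "\<not> chain_rank p \<le> ns"
  obtain c m where c: "alt_chain_on box c m (chain_rank p)"
    using chain_rank_attained[OF p] by blast
  have "chain_rank p - m \<le> ns - ms" using chain_len_le_max[OF c] len by simp
  then have "chain_rank p - m = max_chain_len"
    using gt alt_chain_last[OF c] alt_chain_last[OF cs] len by auto
  then have "chain_rank p = ns" using longest_chain_type_unique[OF cs len c] by simp
  then show False using gt by simp
qed

text \<open>If the longest chains start at index 1, the bottom corner of the box is odd (otherwise
  it would prolong them downwards), so every even point has a chain \<open>(bottom, p)\<close> of type (1,2).\<close>
lemma chain_rank_lower:
  assumes cs: "alt_chain_on box cs ms ns" and len: "ns - ms = max_chain_len" and p: "p \<in> box"
  shows "ms \<le> chain_rank p"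
proof (cases "ms = 0 \<or> \<not> even_pair p")
  case True
  then show ?thesis using chain_rank_parity[OF p] alt_chain_last[OF cs] by (cases "chain_rank p") auto
next
  case False
  then have ms: "ms = 1" and ep: "even_pair p" using alt_chain_last[OF cs] by auto
  have bottom: "(i1, i2) \<in> box" using ik1 ik2 by auto
  have "\<not> even_pair (i1, i2)"
  proof
    assume eb: "even_pair (i1, i2)"
    have "cs 1 \<in> box" "\<not> even_pair (cs 1)"
      using cs ms alt_chain_last[OF cs] by (auto simp: alt_chain_on_def)
    then have "(i1, i2) < cs 1" using eb by (auto simp: less_le less_eq_prod_def)
    then have "alt_chain_on box (cs(0 := (i1, i2))) 0 ns"
      using cs ms bottom eb by (intro alt_chain_extend_below) auto
    then show False using chain_len_le_max len ms alt_chain_last[OF cs] by fastforce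
  qed
  then have "alt_chain_on box (\<lambda>_. (i1, i2)) 1 1"
    using alt_chain_single[OF bottom] by simp
  moreover have "(i1, i2) < p"
    using p ep \<open>\<not> even_pair (i1, i2)\<close> by (auto simp: less_le less_eq_prod_def)
  ultimately have "alt_chain_on box ((\<lambda>_. (i1, i2))(2 := p)) 1 2"
    using p ep alt_chain_extend[where n = 1] by (simp add: numeral_2_eq_2)
  then show ?thesis using chain_rank_ge ms by fastforce
qed

lemma chain_meet_chain:
  "\<exists>c. alt_chain_on box c (fst (chain_meet (i1, k1) (i2, k2))) (snd (chain_meet (i1, k1) (i2, k2)))"
  using longest_chain_exists chain_meet_eq by fastforce

lemma chain_rank_range:
  "p \<in> box \<Longrightarrow> chain_rank p \<in> {fst (chain_meet (i1, k1) (i2, k2))..snd (chain_meet (i1, k1) (i2, k2))}"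
  using longest_chain_exists chain_meet_eq chain_rank_lower chain_rank_upper by fastforce

end

definition upper_corner :: "(nat \<times> nat) set \<Rightarrow> nat \<times> nat" where
  "upper_corner W = (Max (fst ` W), Max (snd ` W))"

lemma upper_corner_in:
  assumes "finite W" "W \<noteq> {}" "W \<subseteq> A1 \<times> A2"
  shows "upper_corner W \<in> A1 \<times> A2"
  using assms Max_in[of "fst ` W"] Max_in[of "snd ` W"] unfolding upper_corner_def by fastforce

lemma upper_corner_mono:
  assumes "finite W'" "W \<noteq> {}" "W \<subseteq> W'"
  shows "upper_corner W \<le> upper_corner W'"
  using assms unfolding upper_corner_def less_eq_prod_def by (auto intro!: Max_mono)

lemma upper_corner_mono_image:
  fixes c :: "nat \<Rightarrow> nat \<times> nat"
  assumes "finite S" "S \<noteq> {}" "\<And>a b. a \<in> S \<Longrightarrow> b \<in> S \<Longrightarrow> a \<le> b \<Longrightarrow> c a \<le> c b"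
  shows "upper_corner (c ` S) = c (Max S)"
proof -
  have "Max ((\<lambda>a. fst (c a)) ` S) = fst (c (Max S))" "Max ((\<lambda>a. snd (c a)) ` S) = snd (c (Max S))"
    using assms by (auto intro!: Max_mono_image simp: less_eq_prod_def)
  then show ?thesis unfolding upper_corner_def image_image by simp
qed

lemma lang_prod_parity_iff:
  assumes x: "x \<in> words ({i1..k1} \<times> {i2..k2})"
  shows "x \<in> lang_prod (parity_lang i1 k1) (parity_lang i2 k2) \<longleftrightarrow>
    even_pair (upper_corner (inf_letters ({i1..k1} \<times> {i2..k2}) x))"
proof -
  let ?S = "inf_letters ({i1..k1} \<times> {i2..k2}) x"
  have "inf_letters {i1..k1} (\<lambda>i. fst (x i)) = fst ` ?S"
    by (rule inf_letters_map[OF _ x]) auto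
  moreover have "inf_letters {i2..k2} (\<lambda>i. snd (x i)) = snd ` ?S"
    by (rule inf_letters_map[OF _ x]) auto
  moreover have "(\<lambda>i. fst (x i)) \<in> words {i1..k1}" "(\<lambda>i. snd (x i)) \<in> words {i2..k2}"
    using x by (auto simp: words_def mem_Times_iff)
  ultimately show ?thesis
    unfolding lang_prod_def parity_lang_iff upper_corner_def even_pair_def by simp
qed

lemma product_le_meet:
  assumes "i1 \<le> k1" "i2 \<le> k2"
  shows "wadge_le ({i1..k1} \<times> {i2..k2}) (lang_prod (parity_lang i1 k1) (parity_lang i2 k2))
    {fst (chain_meet (i1, k1) (i2, k2))..snd (chain_meet (i1, k1) (i2, k2))}
    (parity_lang (fst (chain_meet (i1, k1) (i2, k2))) (snd (chain_meet (i1, k1) (i2, k2))))"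
proof (rule wadge_le_parity_by_window)
  let ?R = "\<lambda>W. chain_rank i1 k1 i2 k2 (upper_corner W)"
  have fin: "finite ({i1..k1} \<times> {i2..k2})" by simp
  have corner: "upper_corner W \<in> {i1..k1} \<times> {i2..k2}"
    if "W \<noteq> {}" "W \<subseteq> {i1..k1} \<times> {i2..k2}" for W
    using that finite_subset[OF that(2) fin] by (intro upper_corner_in)
  show "?R W \<in> {fst (chain_meet (i1, k1) (i2, k2))..snd (chain_meet (i1, k1) (i2, k2))}"
    if "W \<noteq> {}" "W \<subseteq> {i1..k1} \<times> {i2..k2}" for W
    using chain_rank_range[OF assms corner[OF that]] .
  show "?R W \<le> ?R W'" if "W \<noteq> {}" "W \<subseteq> W'" "W' \<subseteq> {i1..k1} \<times> {i2..k2}" for W W'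
  proof (rule chain_rank_mono[OF assms])
    show "upper_corner W \<in> {i1..k1} \<times> {i2..k2}" "upper_corner W' \<in> {i1..k1} \<times> {i2..k2}"
      using that by (intro corner; blast)+
    show "upper_corner W \<le> upper_corner W'"
      using that finite_subset[OF that(3) fin] by (intro upper_corner_mono)
  qed
  show "x \<in> lang_prod (parity_lang i1 k1) (parity_lang i2 k2) \<longleftrightarrow>
      even (?R (inf_letters ({i1..k1} \<times> {i2..k2}) x))"
    if x: "x \<in> words ({i1..k1} \<times> {i2..k2})" for x
  proof -
    have "upper_corner (inf_letters ({i1..k1} \<times> {i2..k2}) x) \<in> {i1..k1} \<times> {i2..k2}"
      using inf_letters_nonempty[OF fin x] inf_letters_subset by (rule corner)
    then show ?thesis using lang_prod_parity_iff[OF x] chain_rank_parity[OF assms] by simp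
  qed
qed (simp)

lemma meet_le_product:
  assumes "i1 \<le> k1" "i2 \<le> k2"
  shows "wadge_le {fst (chain_meet (i1, k1) (i2, k2))..snd (chain_meet (i1, k1) (i2, k2))}
    (parity_lang (fst (chain_meet (i1, k1) (i2, k2))) (snd (chain_meet (i1, k1) (i2, k2))))
    ({i1..k1} \<times> {i2..k2}) (lang_prod (parity_lang i1 k1) (parity_lang i2 k2))"
proof -
  define m where "m = fst (chain_meet (i1, k1) (i2, k2))"
  define n where "n = snd (chain_meet (i1, k1) (i2, k2))"
  obtain c where c: "alt_chain_on ({i1..k1} \<times> {i2..k2}) c m n"
    using chain_meet_chain[OF assms] unfolding m_def n_def by blast
  have "wadge_le {m..n} (parity_lang m n) ({i1..k1} \<times> {i2..k2})
    (lang_prod (parity_lang i1 k1) (parity_lang i2 k2))"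
  proof (rule wadge_le_parity_by_letters)
    show cP: "c a \<in> {i1..k1} \<times> {i2..k2}" if "a \<in> {m..n}" for a
      using c that unfolding alt_chain_on_def by blast
    fix z assume z: "z \<in> words {m..n}"
    define S where "S = inf_letters {m..n} z"
    have S: "finite S" "S \<noteq> {}" "S \<subseteq> {m..n}"
      unfolding S_def using inf_letters_nonempty[OF _ z] inf_letters_subset
      by (simp_all add: inf_letters_finite)
    then have "Max S \<in> {m..n}" using Max_in by blast
    have "c ` {m..n} \<subseteq> {i1..k1} \<times> {i2..k2}" using cP by blast
    then have "inf_letters ({i1..k1} \<times> {i2..k2}) (\<lambda>i. c (z i)) = c ` S"
      unfolding S_def by (rule inf_letters_map[OF _ z, rotated]) simp
    moreover have "upper_corner (c ` S) = c (Max S)"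
    proof (rule upper_corner_mono_image[OF S(1,2)])
      show "c a \<le> c b" if "a \<in> S" "b \<in> S" "a \<le> b" for a b
        using that S(3) by (intro alt_chain_mono[OF c]) auto
    qed
    moreover have "(\<lambda>i. c (z i)) \<in> words ({i1..k1} \<times> {i2..k2})"
      using z cP by (auto simp: words_def)
    ultimately show "(\<lambda>i. c (z i)) \<in> lang_prod (parity_lang i1 k1) (parity_lang i2 k2) \<longleftrightarrow>
        even (Max (inf_letters {m..n} z))"
      using lang_prod_parity_iff c \<open>Max S \<in> {m..n}\<close> unfolding S_def
      by (simp add: alt_chain_on_def)
  qed
  then show ?thesis unfolding m_def n_def .
qed

lemma tuple_alph_finite:
  assumes "finite A"
  shows "finite (tuple_alph k A)"
proof -
  have "tuple_alph k A = {v. \<forall>j. (j \<in> {..<k} \<longrightarrow> v j \<in> A) \<and> (j \<notin> {..<k} \<longrightarrow> v j = 0)}"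
    unfolding tuple_alph_def by (simp add: not_less all_conj_distrib)
  then show ?thesis using finite_set_of_finite_funs[OF finite_lessThan assms] by simp
qed

definition coord_max :: "(nat \<Rightarrow> nat) set \<Rightarrow> nat \<Rightarrow> nat" where
  "coord_max W = (\<lambda>j. Max ((\<lambda>v. v j) ` W))"

lemma coord_max_in:
  assumes "finite W" "W \<noteq> {}" "W \<subseteq> tuple_alph k A"
  shows "coord_max W \<in> tuple_alph k A"
proof -
  have "(j < k \<longrightarrow> coord_max W j \<in> A) \<and> (k \<le> j \<longrightarrow> coord_max W j = 0)" for j
  proof -
    have "coord_max W j \<in> (\<lambda>v. v j) ` W"
      unfolding coord_max_def using assms by (intro Max_in) auto
    then obtain v where v: "v \<in> W" "coord_max W j = v j" by blast
    then have "v \<in> tuple_alph k A" using assms(3) by blast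
    then show ?thesis using v(2) by (simp add: tuple_alph_def)
  qed
  then show ?thesis by (simp add: tuple_alph_def)
qed

lemma coord_max_mono:
  assumes "finite W'" "W \<noteq> {}" "W \<subseteq> W'"
  shows "coord_max W \<le> coord_max W'"
  using assms unfolding coord_max_def le_fun_def by (auto intro!: Max_mono)

lemma coord_max_mono_image:
  fixes g :: "nat \<Rightarrow> nat \<Rightarrow> nat"
  assumes "finite S" "S \<noteq> {}" "\<And>a b. a \<in> S \<Longrightarrow> b \<in> S \<Longrightarrow> a \<le> b \<Longrightarrow> g a \<le> g b"
  shows "coord_max (g ` S) = g (Max S)"
  unfolding coord_max_def image_image
  using assms by (auto intro!: Max_mono_image simp: le_fun_def)

lemma lang_pow_parity_iff:
  assumes x: "x \<in> words (tuple_alph k {lo..hi})"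
  shows "x \<in> lang_pow k (parity_lang lo hi) \<longleftrightarrow>
    (\<forall>j<k. even (coord_max (inf_letters (tuple_alph k {lo..hi}) x) j))"
proof -
  let ?S = "inf_letters (tuple_alph k {lo..hi}) x"
  have "inf_letters {lo..hi} (\<lambda>i. x i j) = (\<lambda>v. v j) ` ?S" if "j < k" for j
    using x that tuple_alph_finite[of "{lo..hi}" k]
    by (intro inf_letters_map) (auto simp: tuple_alph_def)
  moreover have "(\<lambda>i. x i j) \<in> words {lo..hi}" if "j < k" for j
    using x that by (auto simp: words_def tuple_alph_def)
  ultimately show ?thesis
    unfolding lang_pow_def parity_lang_iff coord_max_def by auto
qed

definition tuple_rank :: "nat \<Rightarrow> (nat \<Rightarrow> nat) \<Rightarrow> nat" where
  "tuple_rank k u = 2 * card {j. j < k \<and> u j = 2} + (if \<exists>j<k. u j = 1 then 1 else 0)"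

lemma tuple_rank_le:
  assumes "u \<in> tuple_alph k {0..2}"
  shows "tuple_rank k u \<le> 2 * k"
proof (cases "\<exists>j<k. u j = 1")
  case True
  then obtain j0 where j0: "j0 < k" "u j0 = 1" by auto
  have "card {j. j < k \<and> u j = 2} \<le> card ({..<k} - {j0})"
    using j0 by (intro card_mono) auto
  also have "\<dots> = k - 1" using j0 by auto
  finally show ?thesis using True j0 unfolding tuple_rank_def by auto
next
  case False
  have "card {j. j < k \<and> u j = 2} \<le> card {..<k}" by (intro card_mono) auto
  then show ?thesis using False unfolding tuple_rank_def by auto
qed

lemma tuple_rank_mono:
  assumes u: "u \<le> u'" and u': "u' \<in> tuple_alph k {0..2}"
  shows "tuple_rank k u \<le> tuple_rank k u'"
proof -
  have u2: "u j \<le> u' j \<and> u' j \<le> 2" if "j < k" for j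
    using u u' that by (simp add: le_fun_def tuple_alph_def)
  have sub: "{j. j < k \<and> u j = 2} \<subseteq> {j. j < k \<and> u' j = 2}"
  proof
    fix j assume "j \<in> {j. j < k \<and> u j = 2}"
    then show "j \<in> {j. j < k \<and> u' j = 2}" using u2[of j] by simp
  qed
  have fin: "finite {j. j < k \<and> u' j = 2}" by simp
  show ?thesis
  proof (cases "(\<exists>j<k. u j = 1) \<and> \<not> (\<exists>j<k. u' j = 1)")
    case True
    then obtain j0 where j0: "j0 < k" "u j0 = 1" "u' j0 \<noteq> 1" by auto
    then have "u' j0 = 2" using u2[OF j0(1)] by simp
    then have "j0 \<in> {j. j < k \<and> u' j = 2}" "j0 \<notin> {j. j < k \<and> u j = 2}"
      using j0 by auto
    then have "{j. j < k \<and> u j = 2} \<subset> {j. j < k \<and> u' j = 2}"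
      using sub by auto
    then have "card {j. j < k \<and> u j = 2} < card {j. j < k \<and> u' j = 2}"
      by (rule psubset_card_mono[OF fin])
    then show ?thesis unfolding tuple_rank_def using True by auto
  next
    case False
    have "card {j. j < k \<and> u j = 2} \<le> card {j. j < k \<and> u' j = 2}"
      using card_mono[OF fin sub] .
    then show ?thesis unfolding tuple_rank_def using False by auto
  qed
qed

lemma tuple_rank_parity:
  assumes "u \<in> tuple_alph k {0..2}"
  shows "even (tuple_rank k u) \<longleftrightarrow> (\<forall>j<k. even (u j))"
proof -
  have "u j = 1 \<longleftrightarrow> odd (u j)" if "j < k" for j
  proof -
    have "u j \<le> 2" using assms that by (auto simp: tuple_alph_def)
    then have "u j = 0 \<or> u j = 1 \<or> u j = 2" by auto
    then show ?thesis by auto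
  qed
  then show ?thesis unfolding tuple_rank_def by auto
qed

definition tuple_embed :: "nat \<Rightarrow> nat \<Rightarrow> nat \<Rightarrow> nat" where
  "tuple_embed k a = (\<lambda>j. if j < k \<and> j < a div 2 then 2 else if j < k \<and> j = a div 2 then a mod 2 else 0)"

lemma tuple_embed_in: "tuple_embed k a \<in> tuple_alph k {0..2}"
  unfolding tuple_embed_def tuple_alph_def by auto

lemma tuple_embed_mono:
  assumes "a \<le> b"
  shows "tuple_embed k a \<le> tuple_embed k b"
proof -
  have "a div 2 \<le> b div 2" using assms by (rule div_le_mono)
  moreover have "a div 2 = b div 2 \<Longrightarrow> a mod 2 \<le> b mod 2"
    using assms by (metis add_le_cancel_left div_mult_mod_eq)
  ultimately show ?thesis unfolding tuple_embed_def le_fun_def by auto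
qed

lemma tuple_embed_parity:
  assumes "a \<le> 2 * k"
  shows "(\<forall>j<k. even (tuple_embed k a j)) \<longleftrightarrow> even a"
proof
  assume all_even: "\<forall>j<k. even (tuple_embed k a j)"
  show "even a"
  proof (rule ccontr)
    assume "odd a"
    then have "a div 2 < k" and "a mod 2 = 1" using assms by presburger+
    then show False using all_even unfolding tuple_embed_def by auto
  qed
qed (auto simp: tuple_embed_def)

lemma power_le_parity:
  "wadge_le (tuple_alph k {0..2}) (lang_pow k (parity_lang 0 2)) {0..2 * k} (parity_lang 0 (2 * k))"
proof (rule wadge_le_parity_by_window)
  let ?T = "tuple_alph k {0..2::nat}"
  let ?R = "\<lambda>W. tuple_rank k (coord_max W)"
  show fin: "finite ?T" by (simp add: tuple_alph_finite)
  show "?R W \<in> {0..2 * k}" if "W \<noteq> {}" "W \<subseteq> ?T" for W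
    using that fin by (auto intro!: tuple_rank_le coord_max_in intro: finite_subset)
  show "?R W \<le> ?R W'" if "W \<noteq> {}" "W \<subseteq> W'" "W' \<subseteq> ?T" for W W'
    using that fin
    by (intro tuple_rank_mono coord_max_mono coord_max_in) (auto intro: finite_subset)
  show "x \<in> lang_pow k (parity_lang 0 2) \<longleftrightarrow> even (?R (inf_letters ?T x))"
    if x: "x \<in> words ?T" for x
  proof -
    have "coord_max (inf_letters ?T x) \<in> ?T"
      using inf_letters_finite[OF fin] inf_letters_nonempty[OF fin x] inf_letters_subset
      by (rule coord_max_in)
    then show ?thesis using lang_pow_parity_iff[OF x] tuple_rank_parity by simp
  qed
qed

lemma parity_le_power:
  "wadge_le {0..2 * k} (parity_lang 0 (2 * k)) (tuple_alph k {0..2}) (lang_pow k (parity_lang 0 2))"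
proof (rule wadge_le_parity_by_letters)
  show "tuple_embed k a \<in> tuple_alph k {0..2}" for a by (rule tuple_embed_in)
  fix z assume z: "z \<in> words {0..2 * k}"
  define S where "S = inf_letters {0..2 * k} z"
  have S: "finite S" "S \<noteq> {}" "S \<subseteq> {0..2 * k}"
    unfolding S_def using inf_letters_nonempty[OF _ z] inf_letters_subset
    by (simp_all add: inf_letters_finite)
  then have "Max S \<le> 2 * k" using Max_in by fastforce
  have "inf_letters (tuple_alph k {0..2}) (\<lambda>i. tuple_embed k (z i)) = tuple_embed k ` S"
    unfolding S_def using z tuple_embed_in by (intro inf_letters_map) auto
  moreover have "coord_max (tuple_embed k ` S) = tuple_embed k (Max S)"
    using S tuple_embed_mono by (intro coord_max_mono_image) auto
  moreover have "(\<lambda>i. tuple_embed k (z i)) \<in> words (tuple_alph k {0..2})"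
    using tuple_embed_in by (auto simp: words_def)
  ultimately show "(\<lambda>i. tuple_embed k (z i)) \<in> lang_pow k (parity_lang 0 2) \<longleftrightarrow>
      even (Max (inf_letters {0..2 * k} z))"
    using lang_pow_parity_iff tuple_embed_parity[OF \<open>Max S \<le> 2 * k\<close>] unfolding S_def by simp
qed

theorem lemma8p2:
  shows "(\<forall>\<iota>1 \<kappa>1 \<iota>2 \<kappa>2. \<iota>1 \<le> \<kappa>1 \<longrightarrow> \<iota>2 \<le> \<kappa>2 \<longrightarrow>
            wadge_eq ({\<iota>1..\<kappa>1} \<times> {\<iota>2..\<kappa>2}) (lang_prod (parity_lang \<iota>1 \<kappa>1) (parity_lang \<iota>2 \<kappa>2))
                     {fst (chain_meet (\<iota>1, \<kappa>1) (\<iota>2, \<kappa>2)) .. snd (chain_meet (\<iota>1, \<kappa>1) (\<iota>2, \<kappa>2))}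
                     (parity_lang (fst (chain_meet (\<iota>1, \<kappa>1) (\<iota>2, \<kappa>2))) (snd (chain_meet (\<iota>1, \<kappa>1) (\<iota>2, \<kappa>2)))))
       \<and> (\<forall>k::nat. k \<ge> 1 \<longrightarrow>
            wadge_eq (tuple_alph k {0..2}) (lang_pow k (parity_lang 0 2))
                     {0..2*k} (parity_lang 0 (2*k)))"
proof (intro conjI allI impI)
  fix i1 k1 i2 k2 :: nat
  assume "i1 \<le> k1" "i2 \<le> k2"
  then show "wadge_eq ({i1..k1} \<times> {i2..k2}) (lang_prod (parity_lang i1 k1) (parity_lang i2 k2))
      {fst (chain_meet (i1, k1) (i2, k2))..snd (chain_meet (i1, k1) (i2, k2))}
      (parity_lang (fst (chain_meet (i1, k1) (i2, k2))) (snd (chain_meet (i1, k1) (i2, k2))))"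
    unfolding wadge_eq_def using product_le_meet meet_le_product by blast
next
  fix k :: nat
  show "wadge_eq (tuple_alph k {0..2}) (lang_pow k (parity_lang 0 2)) {0..2 * k} (parity_lang 0 (2 * k))"
    unfolding wadge_eq_def using power_le_parity parity_le_power by blast
qed

end
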